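(* Let $q\equiv 3\pmod 4$ be a prime power, let $U$ be a cyclic subgroup of $\mathrm{PSL}(2,q)$ of order $\frac{q+1}{2}$, and let $V$ be its normalizer in $\mathrm{PSL}(2,q)$, which is a dihedral group of order $q+1$ containing $U$. Then $V$ is a $U$-intersecting subset of $\mathrm{PSL}(2,q)$; in particular $\rho(\mathrm{PSL}(2,q),U)\ge 2$.
   Context: For a finite group $G$ and $H\le G$, a subset $\mathcal F\subseteq G$ is $H$-intersecting if for all $g,g'\in\mathcal F$ there is $x\in G$ with $x^{-1}g'^{-1}gx\in H$; $\rho(G,H)=\max\{|\mathcal F|/|H|\}$ over $H$-intersecting $\mathcal F$. *)

theory Defs
  imports "HOL-Algebra.Algebra"
begin

text \<open>2x2 matrices over a field, as quadruples (a,b,c,d) = [[a,b],[c,d]].\<close>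
type_synonym 'a mat22 = "'a \<times> 'a \<times> 'a \<times> 'a"

definition mmul :: "'a::comm_ring_1 mat22 \<Rightarrow> 'a mat22 \<Rightarrow> 'a mat22" where
  "mmul = (\<lambda>(x1,x2,x3,x4) (y1,y2,y3,y4).
      (x1*y1 + x2*y3, x1*y2 + x2*y4, x3*y1 + x4*y3, x3*y2 + x4*y4))"

definition mdet :: "'a::comm_ring_1 mat22 \<Rightarrow> 'a" where
  "mdet = (\<lambda>(x1,x2,x3,x4). x1*x4 - x2*x3)"

definition SL2 :: "('a::field mat22) monoid" where
  "SL2 = \<lparr>carrier = {M. mdet M = 1}, monoid.mult = mmul, one = (1,0,0,1)\<rparr>"

definition centre_SL2 :: "'a::field mat22 set" where
  "centre_SL2 = {(1,0,0,1), (-1,0,0,-1)}"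

definition PSL2 :: "('a::field mat22 set) monoid" where
  "PSL2 = SL2 Mod centre_SL2"

definition intersecting :: "('g,'b) monoid_scheme \<Rightarrow> 'g set \<Rightarrow> 'g set \<Rightarrow> bool" where
  "intersecting G H F \<longleftrightarrow> F \<subseteq> carrier G \<and>
     (\<forall>g\<in>F. \<forall>g'\<in>F. \<exists>x\<in>carrier G.
        inv\<^bsub>G\<^esub> x \<otimes>\<^bsub>G\<^esub> (inv\<^bsub>G\<^esub> g' \<otimes>\<^bsub>G\<^esub> g) \<otimes>\<^bsub>G\<^esub> x \<in> H)"

definition rho :: "('g,'b) monoid_scheme \<Rightarrow> 'g set \<Rightarrow> real" where
  "rho G H = Max {real (card F) / real (card H) | F. intersecting G H F}"

end

theory Submission
  imports Defs
begin

text \<open>Since \<open>q \<equiv> 3 (mod 4)\<close>, \<open>-1\<close> is not a square in \<open>F\<^sub>q\<close> and \<open>|U| = (q+1)/2\<close> is even, so the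
  cyclic group \<open>U\<close> contains a unique involution \<open>z\<close>. A lift \<open>Z\<close> of \<open>z\<close> to \<open>SL(2,q)\<close> is
  traceless, and \<open>U\<close> is the image of the centralizer \<open>{x I + y Z | x\<^sup>2 + y\<^sup>2 = 1}\<close> of \<open>Z\<close>, a set
  with at most \<open>(q+1)/2\<close> elements. An element \<open>h\<close> of the normalizer \<open>V\<close> fixes \<open>z\<close>, so a lift of
  \<open>h\<close> commutes or anticommutes with \<open>Z\<close>. In the first case \<open>h \<in> U\<close>; in the second the lift is
  traceless of determinant 1, and any two such matrices are conjugate in \<open>SL(2,q)\<close> because
  every element of \<open>F\<^sub>q\<close> is a sum of two squares, so \<open>h\<close> is conjugate to \<open>z \<in> U\<close>. Since \<open>V\<close> is
  a subgroup, it is \<open>U\<close>-intersecting. A matrix anticommuting with \<open>Z\<close> yields an element of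
  \<open>V - U\<close>, whence \<open>|V| \<ge> 2 |U|\<close>.\<close>

section \<open>Finite fields\<close>

lemma of_nat_card_UNIV_eq_0: "of_nat (card (UNIV :: 'a set)) = (0 :: 'a :: {field,finite})"
proof -
  have "(\<Sum>x\<in>(UNIV :: 'a set). x + 1) = (\<Sum>x\<in>UNIV. x)"
    by (rule sum.reindex_bij_witness[of _ "\<lambda>x. x - 1" "\<lambda>x. x + 1"]) auto
  then show ?thesis
    by (simp add: sum.distrib)
qed

lemma two_neq_zero_if_odd_card:
  assumes "odd (card (UNIV :: 'a :: {field,finite} set))"
  shows "(2 :: 'a) \<noteq> 0"
proof
  assume two: "(2 :: 'a) = 0"
  obtain k where "card (UNIV :: 'a set) = 2 * k + 1"
    using assms oddE by blast
  then have "(of_nat (card (UNIV :: 'a set)) :: 'a) = 1"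
    by (simp add: two)
  then show False
    by (simp add: of_nat_card_UNIV_eq_0)
qed

lemma power_card_UNIV_minus_one:
  fixes a :: "'a :: {field,finite}"
  assumes "a \<noteq> 0"
  shows "a ^ (card (UNIV :: 'a set) - 1) = 1"
proof -
  let ?S = "UNIV - {0 :: 'a}"
  have "(\<Prod>x\<in>?S. a * x) = (\<Prod>x\<in>?S. x)"
    by (rule prod.reindex_bij_witness[of _ "\<lambda>x. x / a" "\<lambda>x. a * x"]) (use assms in auto)
  moreover have "(\<Prod>x\<in>?S. x) \<noteq> 0"
    by simp
  ultimately show ?thesis
    by (simp add: prod.distrib card_Diff_singleton)
qed

lemma minus_one_not_square:
  fixes x :: "'a :: {field,finite}"
  assumes "card (UNIV :: 'a set) mod 4 = 3"
  shows "x\<^sup>2 \<noteq> -1"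
proof
  assume x: "x\<^sup>2 = -1"
  define k where "k = card (UNIV :: 'a set) div 4"
  have k: "card (UNIV :: 'a set) - 1 = 2 * (2 * k + 1)"
    using assms unfolding k_def by presburger
  have "x \<noteq> 0"
    using x by auto
  then have "x ^ (2 * (2 * k + 1)) = 1"
    using power_card_UNIV_minus_one k by metis
  then have "(x\<^sup>2) ^ (2 * k + 1) = 1"
    by (simp only: power_mult)
  then have "(1 :: 'a) = -1"
    by (simp add: x)
  then have "(2 :: 'a) = 0"
    by (simp add: eq_neg_iff_add_eq_0)
  moreover have "odd (card (UNIV :: 'a set))"
    using assms by presburger
  ultimately show False
    using two_neq_zero_if_odd_card by blast
qed

text \<open>Pigeonhole: the squares and the values \<open>e - t\<^sup>2\<close> each fill more than half of the field.\<close>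
lemma sum_of_two_squares:
  fixes e :: "'a :: {field,finite}"
  assumes "odd (card (UNIV :: 'a set))"
  shows "\<exists>s t. s\<^sup>2 + t\<^sup>2 = e"
proof -
  define Sq where "Sq = range (\<lambda>y :: 'a. y\<^sup>2)"
  define r where "r y = (SOME x. x\<^sup>2 = y)" for y :: 'a
  have "UNIV \<subseteq> r ` Sq \<union> uminus ` r ` Sq"
  proof
    fix x :: 'a
    have "(r (x\<^sup>2))\<^sup>2 = x\<^sup>2"
      unfolding r_def by (rule someI) (rule refl)
    then have "r (x\<^sup>2) = x \<or> - r (x\<^sup>2) = x"
      by (auto simp: power2_eq_iff)
    moreover have "r (x\<^sup>2) \<in> r ` Sq"
      unfolding Sq_def by blast
    ultimately show "x \<in> r ` Sq \<union> uminus ` r ` Sq"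
      by (metis UnI1 UnI2 image_eqI)
  qed
  then have "card (UNIV :: 'a set) \<le> card (r ` Sq) + card (uminus ` r ` Sq)"
    by (metis card_Un_le card_mono finite order_trans)
  moreover have "card (uminus ` r ` Sq) \<le> card (r ` Sq)" "card (r ` Sq) \<le> card Sq"
    by (simp_all add: card_image_le)
  moreover have "card ((\<lambda>y. e - y) ` Sq) = card Sq"
    by (rule card_image) (simp add: inj_on_def)
  ultimately have less: "card (UNIV :: 'a set) < card Sq + card ((\<lambda>y. e - y) ` Sq)"
    using assms by presburger
  have "Sq \<inter> (\<lambda>y. e - y) ` Sq \<noteq> {}"
  proof
    assume "Sq \<inter> (\<lambda>y. e - y) ` Sq = {}"
    then have "card (Sq \<union> (\<lambda>y. e - y) ` Sq) = card Sq + card ((\<lambda>y. e - y) ` Sq)"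
      by (simp add: card_Un_disjoint)
    with less show False
      by (metis card_mono finite subset_UNIV leD)
  qed
  then show ?thesis
    unfolding Sq_def by (auto simp: algebra_simps)
qed

lemma card_image_le_half:
  assumes fin: "finite S"
    and swap: "\<And>p. p \<in> S \<Longrightarrow> \<sigma> p \<in> S \<and> \<sigma> p \<noteq> p \<and> f (\<sigma> p) = f p"
  shows "2 * card (f ` S) \<le> card S"
proof -
  have fibre: "2 \<le> card {p \<in> S. f p = y}" if y: "y \<in> f ` S" for y
  proof -
    obtain p where p: "p \<in> S" "f p = y"
      using y by blast
    then have "{p, \<sigma> p} \<subseteq> {p \<in> S. f p = y}" "p \<noteq> \<sigma> p"
      using swap[OF p(1)] by auto
    then have "card {p, \<sigma> p} \<le> card {p \<in> S. f p = y}"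
      using fin by (intro card_mono) simp_all
    with \<open>p \<noteq> \<sigma> p\<close> show ?thesis
      by simp
  qed
  have "card S = card (\<Union>y\<in>f ` S. {p \<in> S. f p = y})"
    by (rule arg_cong[where f = card]) auto
  also have "\<dots> = (\<Sum>y\<in>f ` S. card {p \<in> S. f p = y})"
    by (rule card_UN_disjoint) (use fin in auto)
  finally show ?thesis
    using sum_mono[of "f ` S" "\<lambda>_. 2" "\<lambda>y. card {p \<in> S. f p = y}"] fibre by simp
qed

text \<open>The slope of the chord through \<open>(1,0)\<close> identifies the rest of the circle with a subset
  of the field.\<close>
lemma circle_point_eq_slope_param:
  fixes x y :: "'a::field"
  assumes nonsquare: "\<forall>z::'a. z\<^sup>2 \<noteq> -1" and circle: "x * x + y * y = 1" and x1: "x \<noteq> 1"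
  defines "m \<equiv> y / (x - 1)"
  shows "(x, y) = ((m * m - 1) / (m * m + 1), m * ((m * m - 1) / (m * m + 1) - 1))"
proof -
  have y: "y = m * (x - 1)"
    using x1 by (simp add: m_def)
  have "(x - 1) * ((x + 1) + m * m * (x - 1)) = x * x + y * y - 1"
    by (simp add: y algebra_simps)
  with circle x1 have "(x + 1) + m * m * (x - 1) = 0"
    by simp
  moreover have "x * (m * m + 1) - (m * m - 1) = (x + 1) + m * m * (x - 1)"
    by (simp add: algebra_simps)
  ultimately have "x * (m * m + 1) = m * m - 1"
    by simp
  moreover have "m * m + 1 \<noteq> 0"
  proof
    assume "m * m + 1 = 0"
    then have "m\<^sup>2 = -1"
      by (simp add: power2_eq_square eq_neg_iff_add_eq_0)
    with nonsquare show False
      by blast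
  qed
  ultimately have "x = (m * m - 1) / (m * m + 1)"
    by (simp add: eq_divide_eq)
  then show ?thesis
    by (simp add: y)
qed

lemma card_circle_le:
  assumes nonsquare: "\<forall>x::'a::{field,finite}. x\<^sup>2 \<noteq> -1"
  shows "card {(x, y). x\<^sup>2 + y\<^sup>2 = (1::'a)} \<le> card (UNIV :: 'a set) + 1"
proof -
  define C where "C = {(x, y). x\<^sup>2 + y\<^sup>2 = (1::'a)}"
  define slope where "slope p = snd p / (fst p - 1)" for p :: "'a \<times> 'a"
  define recover where "recover m = ((m * m - 1) / (m * m + 1), m * ((m * m - 1) / (m * m + 1) - 1))"
    for m :: 'a
  have "inj_on slope (C - {(1, 0)})"
  proof (rule inj_on_inverseI[where g = recover])
    fix p
    assume "p \<in> C - {(1, 0)}"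
    then obtain x y where p: "p = (x, y)" "x * x + y * y = 1" "(x, y) \<noteq> (1, 0)"
      by (auto simp: C_def power2_eq_square)
    then have "x \<noteq> 1"
      by auto
    then show "recover (slope p) = p"
      using circle_point_eq_slope_param[OF nonsquare p(2)] p(1) by (simp add: recover_def slope_def)
  qed
  then have "card (C - {(1, 0)}) \<le> card (UNIV :: 'a set)"
    using card_image card_mono[of UNIV "slope ` (C - {(1, 0)})"] by fastforce
  moreover have "card C \<le> card (C - {(1, 0)}) + 1"
    using card_Diff_singleton_if[of C "(1, 0)"] by (simp split: if_splits)
  ultimately show ?thesis
    unfolding C_def by linarith
qed

section \<open>Groups\<close>

lemma (in monoid) pow_involution:
  assumes "x \<in> carrier G" "x \<otimes> x = \<one>"
  shows "x [^] (j::nat) = (if even j then \<one> else x)"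
  by (induction j) (use assms in auto)

lemma (in group) pow_half_ord:
  assumes "g \<in> carrier G" "ord g = 2 * m" "0 < m"
  shows "g [^] m \<noteq> \<one>" "g [^] m \<otimes> g [^] m = \<one>"
  using assms pow_ord_eq_1[OF assms(1)] by (simp_all add: pow_eq_id nat_pow_mult mult_2[symmetric])

lemma (in group) cyclic_involution_unique:
  assumes fin: "finite (carrier G)" and g: "g \<in> carrier G" and ord: "ord g = 2 * m"
    and y: "y \<in> generate G {g}" "y \<otimes> y = \<one>"
  shows "y = \<one> \<or> y = g [^] m"
proof -
  obtain k :: nat where k: "y = g [^] k"
    using y(1) generate_pow_on_finite_carrier[OF fin g] by blast
  have "g [^] (k + k) = \<one>"
    using y(2) g by (simp add: k nat_pow_mult)
  then have "2 * m dvd 2 * k"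
    using g ord by (simp add: pow_eq_id mult_2)
  then obtain j where "k = m * j"
    by (auto simp: nat_mult_dvd_cancel_disj)
  then have "y = (g [^] m) [^] j"
    using g by (simp add: k nat_pow_pow)
  moreover have "g [^] m \<otimes> g [^] m = \<one>"
    using g pow_ord_eq_1[OF g] by (simp add: ord nat_pow_mult mult_2[symmetric])
  ultimately show ?thesis
    using g pow_involution[of "g [^] m" j] by (simp split: if_splits)
qed

lemma (in group) normalizer_iff:
  assumes "H \<subseteq> carrier G"
  shows "h \<in> normalizer G H \<longleftrightarrow> h \<in> carrier G \<and> h <# H #> inv h = H"
  unfolding normalizer_def stabilizer_def using assms by auto

lemma (in group) conj_coset_eq_image:
  assumes "h \<in> carrier G" "H \<subseteq> carrier G"
  shows "h <# H #> inv h = (\<lambda>u. h \<otimes> u \<otimes> inv h) ` H"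
  using assms by (auto simp: l_coset_def r_coset_def m_assoc subset_iff)

lemma (in group) normalizer_iff_conj_closed:
  assumes fin: "finite H" and H: "H \<subseteq> carrier G" and h: "h \<in> carrier G"
  shows "h \<in> normalizer G H \<longleftrightarrow> (\<forall>u\<in>H. h \<otimes> u \<otimes> inv h \<in> H)"
proof
  assume "h \<in> normalizer G H"
  then have "(\<lambda>u. h \<otimes> u \<otimes> inv h) ` H = H"
    using H h by (simp add: normalizer_iff conj_coset_eq_image)
  then show "\<forall>u\<in>H. h \<otimes> u \<otimes> inv h \<in> H"
    by blast
next
  assume closed: "\<forall>u\<in>H. h \<otimes> u \<otimes> inv h \<in> H"
  have "inj_on (\<lambda>u. h \<otimes> u \<otimes> inv h) H"
  proof (rule inj_onI)
    fix u v
    assume "u \<in> H" "v \<in> H" "h \<otimes> u \<otimes> inv h = h \<otimes> v \<otimes> inv h"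
    then have "h \<otimes> u = h \<otimes> v"
      using H h by (simp add: r_cancel subset_iff)
    then show "u = v"
      using H h \<open>u \<in> H\<close> \<open>v \<in> H\<close> l_cancel by blast
  qed
  then have "card ((\<lambda>u. h \<otimes> u \<otimes> inv h) ` H) = card H"
    by (rule card_image)
  moreover have "(\<lambda>u. h \<otimes> u \<otimes> inv h) ` H \<subseteq> H"
    using closed by (simp add: image_subset_iff)
  ultimately have "(\<lambda>u. h \<otimes> u \<otimes> inv h) ` H = H"
    using card_subset_eq[OF fin] by simp
  then show "h \<in> normalizer G H"
    using H h normalizer_iff conj_coset_eq_image by simp
qed

lemma (in group) normalizer_fixes_unique_involution:
  assumes "subgroup H G" and "h \<in> normalizer G H"
    and "z \<in> H" "z \<otimes> z = \<one>" and unique: "\<forall>y\<in>H. y \<otimes> y = \<one> \<longrightarrow> y = \<one> \<or> y = z"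
  shows "h \<otimes> z \<otimes> inv h = z"
proof -
  have H: "H \<subseteq> carrier G"
    using assms(1) by (rule subgroup.subset)
  then have h: "h \<in> carrier G" and "h <# H #> inv h = H"
    using assms(2) by (simp_all add: normalizer_iff)
  then have "(\<lambda>u. h \<otimes> u \<otimes> inv h) ` H = H"
    using H by (simp add: conj_coset_eq_image)
  then have conj: "h \<otimes> z \<otimes> inv h \<in> H"
    using assms(3) by blast
  have z: "z \<in> carrier G"
    using H assms(3) by blast
  have "h \<otimes> z \<otimes> inv h \<otimes> (h \<otimes> z \<otimes> inv h) = h \<otimes> (z \<otimes> z) \<otimes> inv h"
    using h z by (simp add: m_assoc) (simp add: m_assoc[symmetric])
  then have "h \<otimes> z \<otimes> inv h \<otimes> (h \<otimes> z \<otimes> inv h) = \<one>"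
    using h assms(4) by simp
  moreover have "h \<otimes> z \<otimes> inv h \<noteq> \<one>" if "z \<noteq> \<one>"
    using h z that by (simp add: inv_solve_right')
  ultimately show ?thesis
    using unique conj by auto
qed

lemma (in group) proper_subgroup_card:
  assumes "finite (carrier G)" "subgroup H G" "subgroup K G" "H \<subseteq> K" "w \<in> K" "w \<notin> H"
  shows "2 * card H \<le> card K"
proof -
  interpret K: group "G\<lparr>carrier := K\<rparr>"
    using assms(3) by (rule subgroup_imp_group)
  have "card H dvd order (G\<lparr>carrier := K\<rparr>)"
    using K.lagrange[OF subgroup_incl[OF assms(2-4)]] by (metis dvd_triv_right)
  then obtain k where k: "card K = card H * k"
    by (auto simp: order_def)
  have K: "finite K"
    using subgroup.subset[OF assms(3)] assms(1) by (rule finite_subset)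
  have "H \<noteq> K"
    using assms(5,6) by blast
  then have "card H \<noteq> card K"
    using card_subset_eq[OF K assms(4)] by blast
  moreover have "card K \<noteq> 0"
    using K assms(5) by auto
  ultimately have "k \<noteq> 0" "k \<noteq> 1"
    using k by auto
  with k show ?thesis
    by (simp add: mult_le_mono2)
qed

lemma intersecting_if_conj_into:
  assumes "group G" "subgroup F G" "\<forall>h\<in>F. \<exists>x\<in>carrier G. inv\<^bsub>G\<^esub> x \<otimes>\<^bsub>G\<^esub> h \<otimes>\<^bsub>G\<^esub> x \<in> H"
  shows "intersecting G H F"
  unfolding intersecting_def
  using assms subgroup.subset subgroup.m_closed subgroup.m_inv_closed by metis

lemma card_div_le_rho:
  assumes "finite (carrier G)" "intersecting G H F"
  shows "real (card F) / real (card H) \<le> rho G H"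
proof -
  have "{F. intersecting G H F} \<subseteq> Pow (carrier G)"
    by (auto simp: intersecting_def)
  then have "finite {F. intersecting G H F}"
    using assms(1) by (rule finite_subset[OF _ finite_Pow_iff[THEN iffD2]])
  then have "finite {real (card F) / real (card H) | F. intersecting G H F}"
    by (simp add: setcompr_eq_image)
  then show ?thesis
    unfolding rho_def using assms(2) by (auto intro: Max_ge)
qed

lemma (in group) intertwine_common:
  assumes "x \<in> carrier G" "y \<in> carrier G" "z \<in> carrier G" "h \<in> carrier G" "j \<in> carrier G"
    and "x \<otimes> z = j \<otimes> x" and "y \<otimes> h = j \<otimes> y"
  shows "(inv y \<otimes> x) \<otimes> z = h \<otimes> (inv y \<otimes> x)"
proof -
  have "h = inv y \<otimes> j \<otimes> y"
    using assms by (simp add: inv_solve_left m_assoc)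
  then have "h \<otimes> (inv y \<otimes> x) = inv y \<otimes> (j \<otimes> x)"
    using assms by (simp add: m_assoc[symmetric]) (simp add: m_assoc)
  also have "\<dots> = (inv y \<otimes> x) \<otimes> z"
    using assms by (simp add: m_assoc)
  finally show ?thesis ..
qed

section \<open>\<open>2 \<times> 2\<close> matrices\<close>

definition mneg :: "'a::comm_ring_1 mat22 \<Rightarrow> 'a mat22" where
  "mneg = (\<lambda>(x1,x2,x3,x4). (-x1,-x2,-x3,-x4))"

definition madj :: "'a::comm_ring_1 mat22 \<Rightarrow> 'a mat22" where
  "madj = (\<lambda>(x1,x2,x3,x4). (x4,-x2,-x3,x1))"

definition mlin :: "'a::comm_ring_1 \<Rightarrow> 'a \<Rightarrow> 'a mat22 \<Rightarrow> 'a mat22" where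
  "mlin x y = (\<lambda>(m1,m2,m3,m4). (x + y * m1, y * m2, y * m3, x + y * m4))"

lemma mmul_simp [simp]: "mmul (x1,x2,x3,x4) (y1,y2,y3,y4) =
      (x1 * y1 + x2 * y3, x1 * y2 + x2 * y4, x3 * y1 + x4 * y3, x3 * y2 + x4 * y4)"
  by (simp add: mmul_def)

lemma mdet_simp [simp]: "mdet (x1,x2,x3,x4) = x1 * x4 - x2 * x3"
  by (simp add: mdet_def)

lemma mneg_simp [simp]: "mneg (x1,x2,x3,x4) = (-x1,-x2,-x3,-x4)"
  by (simp add: mneg_def)

lemma madj_simp [simp]: "madj (x1,x2,x3,x4) = (x4,-x2,-x3,x1)"
  by (simp add: madj_def)

lemma mlin_simp [simp]: "mlin x y (m1,m2,m3,m4) = (x + y * m1, y * m2, y * m3, x + y * m4)"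
  by (simp add: mlin_def)

lemma mmul_assoc: "mmul (mmul A B) C = mmul A (mmul B (C::'a::comm_ring_1 mat22))"
  by (cases A rule: prod_cases4, cases B rule: prod_cases4, cases C rule: prod_cases4)
     (simp add: algebra_simps)

lemma mmul_one_left [simp]: "mmul (1,0,0,1) A = (A::'a::comm_ring_1 mat22)"
  by (cases A rule: prod_cases4) simp

lemma mmul_one_right [simp]: "mmul A (1,0,0,1) = (A::'a::comm_ring_1 mat22)"
  by (cases A rule: prod_cases4) simp

lemma mdet_traceless_eq_one_iff: "mdet (a,b,c,-a) = 1 \<longleftrightarrow> a * a + b * c = (-1::'a::comm_ring_1)"
proof -
  have "mdet (a,b,c,-a) = - (a * a + b * c)"
    by (simp add: algebra_simps)
  then show ?thesis
    by (metis add.inverse_inverse neg_equal_iff_equal)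
qed

lemma mdet_mmul: "mdet (mmul A B) = mdet A * mdet (B::'a::comm_ring_1 mat22)"
  by (cases A rule: prod_cases4, cases B rule: prod_cases4) (simp add: algebra_simps)

lemma mmul_mneg_left: "mmul (mneg A) B = mneg (mmul A (B::'a::comm_ring_1 mat22))"
  by (cases A rule: prod_cases4, cases B rule: prod_cases4) (simp add: algebra_simps)

lemma mmul_mneg_right: "mmul A (mneg B) = mneg (mmul A (B::'a::comm_ring_1 mat22))"
  by (cases A rule: prod_cases4, cases B rule: prod_cases4) (simp add: algebra_simps)

lemma mneg_mneg [simp]: "mneg (mneg A) = (A::'a::comm_ring_1 mat22)"
  by (cases A rule: prod_cases4) simp

lemma mneg_eq_iff: "mneg A = B \<longleftrightarrow> A = mneg (B::'a::comm_ring_1 mat22)"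
  by auto

lemma mdet_madj [simp]: "mdet (madj A) = mdet (A::'a::comm_ring_1 mat22)"
  by (cases A rule: prod_cases4) (simp add: algebra_simps)

lemma mmul_madj_left: "mdet A = 1 \<Longrightarrow> mmul (madj A) A = ((1,0,0,1)::'a::comm_ring_1 mat22)"
  by (cases A rule: prod_cases4) (simp add: algebra_simps)

lemma mmul_madj_right: "mdet A = 1 \<Longrightarrow> mmul A (madj A) = ((1,0,0,1)::'a::comm_ring_1 mat22)"
  by (cases A rule: prod_cases4) (simp add: algebra_simps)

lemma mneg_neq_self:
  assumes "(2::'a::field) \<noteq> 0" and "mdet M \<noteq> 0"
  shows "mneg M \<noteq> (M::'a mat22)"
proof
  assume "mneg M = M"
  then have "M = (0,0,0,0)"
    using assms(1) by (cases M rule: prod_cases4) auto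
  with assms(2) show False
    by simp
qed

lemma madj_anticommute:
  fixes W Z :: "'a::comm_ring_1 mat22"
  assumes "mdet W = 1" "mmul W Z = mneg (mmul Z W)"
  shows "mmul (madj W) Z = mneg (mmul Z (madj W))"
proof -
  have ZW: "mmul Z W = mneg (mmul W Z)"
    using assms(2) by (metis mneg_mneg)
  have "mmul (madj W) Z = mmul (mmul (madj W) Z) (mmul W (madj W))"
    using assms(1) by (simp add: mmul_madj_right)
  also have "\<dots> = mmul (madj W) (mmul (mmul Z W) (madj W))"
    by (simp only: mmul_assoc)
  also have "\<dots> = mneg (mmul (mmul (madj W) W) (mmul Z (madj W)))"
    by (simp only: ZW mmul_mneg_left mmul_mneg_right mmul_assoc)
  also have "\<dots> = mneg (mmul Z (madj W))"
    using assms(1) by (simp add: mmul_madj_left)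
  finally show ?thesis .
qed

lemma anticommute_conj_preserves_commute:
  fixes W Z B :: "'a::comm_ring_1 mat22"
  assumes W: "mdet W = 1" "mmul W Z = mneg (mmul Z W)" and B: "mmul B Z = mmul Z B"
  shows "mmul (mmul (mmul W B) (madj W)) Z = mmul Z (mmul (mmul W B) (madj W))"
proof -
  have "mmul (mmul (mmul W B) (madj W)) Z = mneg (mmul (mmul W (mmul B Z)) (madj W))"
    using madj_anticommute[OF W] by (simp only: mmul_mneg_right mmul_assoc)
  also have "\<dots> = mneg (mmul (mmul (mmul W Z) B) (madj W))"
    by (simp only: B mmul_assoc)
  also have "\<dots> = mmul Z (mmul (mmul W B) (madj W))"
    by (simp only: W(2) mmul_mneg_left mneg_mneg mmul_assoc)
  finally show ?thesis .
qed

lemma SL2_simps [simp]: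
  "carrier SL2 = {M. mdet M = 1}" "monoid.mult SL2 = mmul" "one SL2 = (1,0,0,1)"
  by (simp_all add: SL2_def)

lemma SL2_group: "group (SL2 :: 'a::field mat22 monoid)"
proof (rule groupI)
  fix x :: "'a mat22"
  assume "x \<in> carrier SL2"
  then show "\<exists>y\<in>carrier SL2. y \<otimes>\<^bsub>SL2\<^esub> x = \<one>\<^bsub>SL2\<^esub>"
    by (intro bexI[of _ "madj x"]) (auto simp: mmul_madj_left)
qed (auto simp: mdet_mmul mmul_assoc)

lemma SL2_inv: "mdet A = 1 \<Longrightarrow> inv\<^bsub>SL2\<^esub> A = madj (A::'a::field mat22)"
  using group.inv_equality[OF SL2_group, of "madj A" A] by (simp add: mmul_madj_left)

section \<open>Traceless matrices of determinant one\<close>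

lemma traceless_if_square_scalar:
  fixes a b c d :: "'a::field"
  assumes two: "(2::'a) \<noteq> 0" and nonsquare: "\<forall>x::'a. x\<^sup>2 \<noteq> -1"
    and det: "a * d - b * c = 1"
    and not_scalar: "(a,b,c,d) \<noteq> (1,0,0,1)" "(a,b,c,d) \<noteq> (-1,0,0,-1)"
    and square: "mmul (a,b,c,d) (a,b,c,d) \<in> {(1,0,0,1), (-1,0,0,-1)}"
  shows "d = -a"
proof (rule ccontr)
  assume "d \<noteq> -a"
  then have trace: "a + d \<noteq> 0"
    by (simp add: add_eq_0_iff)
  from square have "b * (a+d) = 0" "c * (a+d) = 0"
    by (auto simp: algebra_simps)
  with trace have bc: "b = 0" "c = 0"
    by auto
  with square nonsquare have "a * a = 1" "d * d = 1"
    by (auto simp: power2_eq_square)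
  moreover have "a * d = 1"
    using det bc by simp
  ultimately have "d = a" "a = 1 \<or> a = -1"
    by (metis mult_cancel_left mult_eq_0_iff one_neq_zero, metis power2_eq_1_iff power2_eq_square)
  with bc not_scalar show False
    by auto
qed

lemma traceless_offdiag_nonzero:
  fixes a b c :: "'a::field"
  assumes "\<forall>x::'a. x\<^sup>2 \<noteq> -1" and "a * a + b * c = -1"
  shows "b \<noteq> 0" "c \<noteq> 0"
  using assms by (auto simp: power2_eq_square)

lemma mlin_commute: "mmul (mlin x y M) M = mmul M (mlin x y (M::'a::comm_ring_1 mat22))"
  by (cases M rule: prod_cases4) (simp add: algebra_simps)

lemma mlin_uminus: "mlin (-x) (-y) M = mneg (mlin x y (M::'a::comm_ring_1 mat22))"
  by (cases M rule: prod_cases4) (simp add: algebra_simps)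

lemma mdet_mlin_traceless:
  fixes a b c x y :: "'a::comm_ring_1"
  assumes "a * a + b * c = -1"
  shows "mdet (mlin x y (a,b,c,-a)) = x\<^sup>2 + y\<^sup>2"
proof -
  have "mdet (mlin x y (a,b,c,-a)) = x * x - y * y * (a * a + b * c)"
    by (simp add: algebra_simps)
  then show ?thesis
    using assms by (simp add: power2_eq_square)
qed

lemma commute_traceless_imp_mlin:
  fixes a b c :: "'a::field"
  assumes c: "c \<noteq> 0" and commute: "mmul B (a,b,c,-a) = mmul (a,b,c,-a) B"
  shows "\<exists>x y. B = mlin x y (a,b,c,-a)"
proof -
  obtain x y u w where B: "B = (x,y,u,w)"
    by (cases B rule: prod_cases4)
  from commute have "x * a + y * c = a * x + b * u" "u * a + w * c = c * x + - a * u"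
    unfolding B by (simp_all only: mmul_simp prod.inject)
  then have "y * c = b * u" "w * c = c * x - 2 * a * u"
    by (simp_all add: algebra_simps)
  with c have "y = u / c * b" "w = (c * x - 2 * a * u) / c"
    by (simp_all add: eq_divide_eq algebra_simps)
  with c have "B = mlin (x - u / c * a) (u / c) (a,b,c,-a)"
    unfolding B by (simp add: diff_divide_distrib)
  then show ?thesis
    by blast
qed

lemma anticommute_traceless_imp_traceless:
  fixes a b c x y u w :: "'a::field"
  assumes "b \<noteq> 0"
    and "mmul (x,y,u,w) (a,b,c,-a) = mneg (mmul (a,b,c,-a) (x,y,u,w))"
  shows "w = -x"
proof -
  from assms(2) have "b * (x + w) = 0"
    by (simp add: algebra_simps)
  with assms(1) show ?thesis
    by (simp add: add_eq_0_iff2)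
qed

text \<open>Over any field, \<open>(s,t) \<mapsto> M\<close> below parametrises the solutions of \<open>M Z = J M\<close> for
  \<open>J = (0,-1,1,0)\<close>, and \<open>det M = c (s\<^sup>2 + t\<^sup>2)\<close>.\<close>
lemma traceless_intertwine_standard:
  fixes a b c s t :: "'a::field"
  assumes Z: "a * a + b * c = -1" and st: "c * (s\<^sup>2 + t\<^sup>2) = 1"
  defines "M \<equiv> (c * s, - t - a * s, c * t, s - a * t)"
  shows "mdet M = 1" "mmul M (a,b,c,-a) = mmul (0,-1,1,0) M"
proof -
  have "mdet M = c * (s\<^sup>2 + t\<^sup>2)"
    unfolding M_def by (simp add: algebra_simps power2_eq_square)
  then show "mdet M = 1"
    using st by simp
  have "c * s * b + (- t - a * s) * - a = s * (a * a + b * c) + a * t"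
    "c * t * b - (s - a * t) * a = t * (a * a + b * c) - a * s"
    by (simp_all add: algebra_simps)
  then show "mmul M (a,b,c,-a) = mmul (0,-1,1,0) M"
    unfolding M_def using Z by (simp add: algebra_simps)
qed

lemma traceless_intertwine_standard_exists:
  fixes a b c :: "'a::{field,finite}"
  assumes "odd (card (UNIV::'a set))" and "a * a + b * c = -1" and "c \<noteq> 0"
  shows "\<exists>M. mdet M = 1 \<and> mmul M (a,b,c,-a) = mmul (0,-1,1,0) M"
proof -
  obtain s t :: 'a where "s\<^sup>2 + t\<^sup>2 = 1 / c"
    using sum_of_two_squares[OF assms(1)] by blast
  with assms(3) have "c * (s\<^sup>2 + t\<^sup>2) = 1"
    by simp
  with traceless_intertwine_standard[OF assms(2)] show ?thesis
    by blast
qed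

lemma traceless_intertwine:
  fixes a1 b1 c1 a2 b2 c2 :: "'a::{field,finite}"
  assumes "odd (card (UNIV::'a set))"
    and "a1 * a1 + b1 * c1 = -1" "c1 \<noteq> 0" and "a2 * a2 + b2 * c2 = -1" "c2 \<noteq> 0"
  shows "\<exists>M. mdet M = 1 \<and> mmul M (a1,b1,c1,-a1) = mmul (a2,b2,c2,-a2) M"
proof -
  obtain X1 where X1: "mdet X1 = 1" "mmul X1 (a1,b1,c1,-a1) = mmul (0,-1,1,0) X1"
    using traceless_intertwine_standard_exists assms(1-3) by blast
  obtain X2 where X2: "mdet X2 = 1" "mmul X2 (a2,b2,c2,-a2) = mmul (0,-1,1,0) X2"
    using traceless_intertwine_standard_exists assms(1,4,5) by blast
  have "mdet (a1,b1,c1,-a1) = 1" "mdet (a2,b2,c2,-a2) = 1"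
    using assms(2,4) mdet_traceless_eq_one_iff by blast+
  then have "mmul (mmul (madj X2) X1) (a1,b1,c1,-a1) = mmul (a2,b2,c2,-a2) (mmul (madj X2) X1)"
    using group.intertwine_common[OF SL2_group, of X1 X2 "(a1,b1,c1,-a1)" "(a2,b2,c2,-a2)"
        "(0,-1,1,0)"] X1 X2 by (simp add: SL2_inv)
  moreover have "mdet (mmul (madj X2) X1) = 1"
    using X1 X2 by (simp add: mdet_mmul)
  ultimately show ?thesis
    by blast
qed

lemma traceless_anticommute_exists:
  fixes a b c :: "'a::{field,finite}"
  assumes "odd (card (UNIV::'a set))" and "a * a + b * c = -1" and "c \<noteq> 0"
  shows "\<exists>W. mdet W = 1 \<and> mmul W (a,b,c,-a) = mneg (mmul (a,b,c,-a) W)"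
proof -
  have "mneg (a,b,c,-a) = (-a,-b,-c,-(-a))"
    by simp
  then show ?thesis
    using traceless_intertwine[OF assms(1-3), of "-a" "-b" "-c"] assms(2,3)
    by (simp add: mmul_mneg_left[symmetric])
qed

lemma anticommute_traceless_intertwine:
  fixes a b c :: "'a::{field,finite}"
  assumes odd: "odd (card (UNIV :: 'a set))" and nonsquare: "\<forall>x::'a. x\<^sup>2 \<noteq> -1"
    and Z: "a * a + b * c = -1" and B: "mdet B = 1"
    and anticommute: "mmul B (a,b,c,-a) = mneg (mmul (a,b,c,-a) B)"
  shows "\<exists>Q. mdet Q = 1 \<and> mmul Q (a,b,c,-a) = mmul B Q"
proof -
  obtain x y u w where B_eq: "B = (x,y,u,w)"
    by (cases B rule: prod_cases4)
  from anticommute have "mmul (x,y,u,w) (a,b,c,-a) = mneg (mmul (a,b,c,-a) (x,y,u,w))"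
    by (simp only: B_eq)
  then have "w = -x"
    by (rule anticommute_traceless_imp_traceless[OF traceless_offdiag_nonzero(1)[OF nonsquare Z]])
  then have B_traceless: "B = (x,y,u,-x)"
    using B_eq by blast
  then have B_sq: "x * x + y * u = -1"
    using B mdet_traceless_eq_one_iff by blast
  then have "u \<noteq> 0"
    by (rule traceless_offdiag_nonzero(2)[OF nonsquare])
  then show ?thesis
    using traceless_intertwine[OF odd Z traceless_offdiag_nonzero(2)[OF nonsquare Z] B_sq]
      B_traceless by simp
qed

section \<open>The projection onto \<open>PSL(2,F)\<close>\<close>

lemma centre_SL2_normal: "centre_SL2 \<lhd> (SL2 :: 'a::field mat22 monoid)"
proof -
  have "subgroup centre_SL2 (SL2 :: 'a mat22 monoid)"
    by (rule group.subgroupI[OF SL2_group]) (auto simp: centre_SL2_def SL2_inv)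
  then show ?thesis
    unfolding group.normal_inv_iff[OF SL2_group]
    by (auto simp: centre_SL2_def SL2_inv algebra_simps mmul_madj_right
        mmul_mneg_left[of "(1,0,0,1)", simplified])
qed

definition pr :: "'a::field mat22 \<Rightarrow> 'a mat22 set" where
  "pr A = centre_SL2 #>\<^bsub>SL2\<^esub> A"

lemma pr_eq: "pr A = {A, mneg (A::'a::field mat22)}"
proof -
  have "mmul (-1,0,0,-1) A = mneg A"
    by (cases A rule: prod_cases4) simp
  then show ?thesis
    by (auto simp: pr_def r_coset_def centre_SL2_def)
qed

lemma pr_mneg [simp]: "pr (mneg A) = pr A"
  by (auto simp: pr_eq)

lemma pr_eq_iff: "pr A = pr B \<longleftrightarrow> B = A \<or> B = mneg (A::'a::field mat22)"
  by (auto simp: pr_eq doubleton_eq_iff)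

lemma PSL2_group: "group (PSL2 :: 'a::field mat22 set monoid)"
  unfolding PSL2_def by (rule normal.factorgroup_is_group[OF centre_SL2_normal])

lemma pr_hom: "pr \<in> hom SL2 (PSL2 :: 'a::field mat22 set monoid)"
  unfolding PSL2_def pr_def[abs_def] by (rule normal.r_coset_hom_Mod[OF centre_SL2_normal])

lemma PSL2_carrier: "carrier (PSL2 :: 'a::field mat22 set monoid) = pr ` {M. mdet M = 1}"
  by (simp add: PSL2_def carrier_FactGroup pr_def[abs_def])

lemma finite_PSL2_carrier: "finite (carrier (PSL2 :: 'a::{field,finite} mat22 set monoid))"
  by (simp add: PSL2_carrier)

lemma pr_in_carrier: "mdet A = 1 \<Longrightarrow> pr (A::'a::field mat22) \<in> carrier PSL2"
  by (simp add: PSL2_carrier)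

lemma PSL2_one: "\<one>\<^bsub>PSL2\<^esub> = pr ((1,0,0,1) :: 'a::field mat22)"
  by (simp add: PSL2_def pr_eq centre_SL2_def)

lemma pr_mult: "mdet A = 1 \<Longrightarrow> mdet B = 1 \<Longrightarrow>
   pr A \<otimes>\<^bsub>PSL2\<^esub> pr B = pr (mmul A (B::'a::field mat22))"
  using hom_mult[OF pr_hom, of A B] by simp

lemma pr_inv: "mdet A = 1 \<Longrightarrow> inv\<^bsub>PSL2\<^esub> (pr A) = pr (madj (A::'a::field mat22))"
  using group_hom.hom_inv[of SL2 PSL2 pr A] SL2_inv[of A]
  by (simp add: group_hom_def group_hom_axioms_def SL2_group PSL2_group pr_hom)

lemma pr_pow: "mdet A = 1 \<Longrightarrow> pr (A [^]\<^bsub>SL2\<^esub> (k::nat)) = pr (A::'a::field mat22) [^]\<^bsub>PSL2\<^esub> k"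
  using hom_nat_pow[OF pr_hom _ SL2_group PSL2_group, of A k] by simp

lemma pr_conj:
  "mdet A = 1 \<Longrightarrow> mdet B = 1 \<Longrightarrow>
   pr A \<otimes>\<^bsub>PSL2\<^esub> pr B \<otimes>\<^bsub>PSL2\<^esub> inv\<^bsub>PSL2\<^esub> (pr A) = pr (mmul (mmul A B) (madj (A::'a::field mat22)))"
  by (simp add: pr_inv pr_mult mdet_mmul)

lemma pr_intertwine_conj:
  fixes Q B Z :: "'a::field mat22"
  assumes "mdet Q = 1" "mdet B = 1" "mmul Q Z = mmul B Q"
  shows "inv\<^bsub>PSL2\<^esub> (pr Q) \<otimes>\<^bsub>PSL2\<^esub> pr B \<otimes>\<^bsub>PSL2\<^esub> pr Q = pr Z"
proof -
  have "inv\<^bsub>PSL2\<^esub> (pr Q) \<otimes>\<^bsub>PSL2\<^esub> pr B \<otimes>\<^bsub>PSL2\<^esub> pr Q = pr (mmul (mmul (madj Q) B) Q)"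
    using assms(1,2) by (simp add: pr_inv pr_mult mdet_mmul)
  also have "mmul (mmul (madj Q) B) Q = mmul (madj Q) (mmul Q Z)"
    by (simp only: mmul_assoc assms(3))
  also have "\<dots> = Z"
    by (simp only: mmul_assoc[symmetric] mmul_madj_left[OF assms(1)] mmul_one_left)
  finally show ?thesis .
qed

lemma pr_conj_eq_imp_commute_up_to_sign:
  fixes B Z :: "'a::field mat22"
  assumes "mdet B = 1" "mdet Z = 1"
    and "pr B \<otimes>\<^bsub>PSL2\<^esub> pr Z \<otimes>\<^bsub>PSL2\<^esub> inv\<^bsub>PSL2\<^esub> (pr B) = pr Z"
  shows "mmul B Z = mmul Z B \<or> mmul B Z = mneg (mmul Z B)"
proof -
  define M where "M = mmul (mmul B Z) (madj B)"
  have "Z = M \<or> Z = mneg M"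
    using assms by (simp add: pr_conj pr_eq_iff M_def)
  moreover have "mmul M B = mmul B Z"
    using assms(1) by (simp add: M_def mmul_assoc mmul_madj_left)
  ultimately have "mmul Z B = mmul B Z \<or> mmul Z B = mneg (mmul B Z)"
    by (auto simp: mmul_mneg_left)
  then show ?thesis
    by (metis mneg_mneg)
qed

lemma PSL2_involution_lift_traceless:
  fixes Z :: "'a::field mat22"
  assumes "(2::'a) \<noteq> 0" and "\<forall>x::'a. x\<^sup>2 \<noteq> -1" and "mdet Z = 1"
    and "pr Z \<noteq> \<one>\<^bsub>PSL2\<^esub>" and "pr Z \<otimes>\<^bsub>PSL2\<^esub> pr Z = \<one>\<^bsub>PSL2\<^esub>"
  shows "\<exists>a b c. Z = (a,b,c,-a) \<and> a * a + b * c = -1"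
proof -
  obtain a b c d where Z: "Z = (a,b,c,d)"
    by (cases Z rule: prod_cases4)
  have "(a,b,c,d) \<noteq> (1,0,0,1)" "(a,b,c,d) \<noteq> (-1,0,0,-1)"
    using assms(4) pr_mneg[of "(1,0,0,1) :: 'a mat22"] by (auto simp: Z PSL2_one)
  moreover have "mmul (a,b,c,d) (a,b,c,d) \<in> {(1,0,0,1), (-1,0,0,-1)}"
    using assms(3,5) pr_eq_iff[of "(1,0,0,1)" "mmul Z Z"] by (auto simp: Z pr_mult PSL2_one)
  ultimately have "d = -a"
    using traceless_if_square_scalar assms(1-3) Z by simp
  with assms(3) have "mdet (a,b,c,-a) = 1"
    by (simp add: Z)
  with \<open>d = -a\<close> show ?thesis
    using Z mdet_traceless_eq_one_iff by blast
qed

section \<open>The image of the centralizer of a traceless matrix\<close>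

definition proj_centralizer :: "'a::field mat22 \<Rightarrow> 'a mat22 set set" where
  "proj_centralizer Z = {pr B | B. mdet B = 1 \<and> mmul B Z = mmul Z B}"

lemma proj_centralizer_subset_carrier: "proj_centralizer Z \<subseteq> carrier PSL2"
  by (auto simp: proj_centralizer_def pr_in_carrier)

lemma proj_centralizer_eq_circle_image:
  fixes a b c :: "'a::field"
  assumes "a * a + b * c = -1" "c \<noteq> 0"
  shows "proj_centralizer (a,b,c,-a) =
    (\<lambda>(x, y). pr (mlin x y (a,b,c,-a))) ` {(x, y). x\<^sup>2 + y\<^sup>2 = 1}"
proof (intro equalityI subsetI)
  fix h
  assume "h \<in> proj_centralizer (a,b,c,-a)"
  then obtain B where B: "h = pr B" "mdet B = 1" "mmul B (a,b,c,-a) = mmul (a,b,c,-a) B"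
    unfolding proj_centralizer_def by blast
  then obtain x y where "B = mlin x y (a,b,c,-a)"
    using commute_traceless_imp_mlin[OF assms(2)] by blast
  with B assms(1) show "h \<in> (\<lambda>(x, y). pr (mlin x y (a,b,c,-a))) ` {(x, y). x\<^sup>2 + y\<^sup>2 = 1}"
    by (auto simp: mdet_mlin_traceless simp del: mlin_simp)
next
  fix h
  assume "h \<in> (\<lambda>(x, y). pr (mlin x y (a,b,c,-a))) ` {(x, y). x\<^sup>2 + y\<^sup>2 = 1}"
  then obtain x y where h: "h = pr (mlin x y (a,b,c,-a))" "x\<^sup>2 + y\<^sup>2 = 1"
    by auto
  then have "mdet (mlin x y (a,b,c,-a)) = 1"
    using mdet_mlin_traceless[OF assms(1)] by simp
  with h(1) mlin_commute show "h \<in> proj_centralizer (a,b,c,-a)"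
    unfolding proj_centralizer_def by blast
qed

lemma card_proj_centralizer_le:
  fixes a b c :: "'a::{field,finite}"
  assumes "(2::'a) \<noteq> 0" "\<forall>x::'a. x\<^sup>2 \<noteq> -1" "a * a + b * c = -1" "c \<noteq> 0"
  shows "2 * card (proj_centralizer (a,b,c,-a)) \<le> card (UNIV :: 'a set) + 1"
proof -
  have "2 * card ((\<lambda>(x, y). pr (mlin x y (a,b,c,-a))) ` {(x, y). x\<^sup>2 + y\<^sup>2 = 1})
      \<le> card {(x, y). x\<^sup>2 + y\<^sup>2 = (1::'a)}"
  proof (rule card_image_le_half[where \<sigma> = "\<lambda>(x, y). (-x, -y)"])
    fix p :: "'a \<times> 'a"
    assume "p \<in> {(x, y). x\<^sup>2 + y\<^sup>2 = 1}"
    then obtain x y where p: "p = (x, y)" "x\<^sup>2 + y\<^sup>2 = 1"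
      by blast
    have "(-x, -y) \<noteq> (x, y)"
    proof
      assume "(-x, -y) = (x, y)"
      then have "2 * x = 0" "2 * y = 0"
        by (metis eq_neg_iff_add_eq_0 mult_2 prod.inject)+
      with assms(1) p(2) show False
        by simp
    qed
    with p show "(\<lambda>(x, y). (-x, -y)) p \<in> {(x, y). x\<^sup>2 + y\<^sup>2 = 1} \<and>
        (\<lambda>(x, y). (-x, -y)) p \<noteq> p \<and>
        (\<lambda>(x, y). pr (mlin x y (a,b,c,-a))) ((\<lambda>(x, y). (-x, -y)) p) =
        (\<lambda>(x, y). pr (mlin x y (a,b,c,-a))) p"
      by (simp add: mlin_uminus del: mlin_simp)
  qed simp
  then show ?thesis
    using proj_centralizer_eq_circle_image[OF assms(3,4)] card_circle_le[OF assms(2)] by simp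
qed

lemma finite_proj_centralizer: "finite (proj_centralizer (Z :: 'a::{field,finite} mat22))"
  using proj_centralizer_subset_carrier finite_PSL2_carrier by (rule finite_subset)

lemma pr_in_proj_centralizer_self: "mdet Z = 1 \<Longrightarrow> pr Z \<in> proj_centralizer Z"
  unfolding proj_centralizer_def by blast

lemma anticommuting_in_normalizer:
  fixes W Z :: "'a::{field,finite} mat22"
  assumes W: "mdet W = 1" "mmul W Z = mneg (mmul Z W)"
  shows "pr W \<in> normalizer PSL2 (proj_centralizer Z)"
proof -
  interpret PSL2: group "PSL2 :: 'a mat22 set monoid"
    by (rule PSL2_group)
  have "pr W \<otimes>\<^bsub>PSL2\<^esub> u \<otimes>\<^bsub>PSL2\<^esub> inv\<^bsub>PSL2\<^esub> (pr W) \<in> proj_centralizer Z"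
    if u: "u \<in> proj_centralizer Z" for u
  proof -
    obtain B where B: "u = pr B" "mdet B = 1" "mmul B Z = mmul Z B"
      using u unfolding proj_centralizer_def by blast
    then have "mdet (mmul (mmul W B) (madj W)) = 1"
      using W(1) by (simp add: mdet_mmul)
    moreover have "pr W \<otimes>\<^bsub>PSL2\<^esub> u \<otimes>\<^bsub>PSL2\<^esub> inv\<^bsub>PSL2\<^esub> (pr W) = pr (mmul (mmul W B) (madj W))"
      using B(1,2) W(1) by (simp add: pr_conj)
    ultimately show ?thesis
      using anticommute_conj_preserves_commute[OF W B(3)] unfolding proj_centralizer_def by blast
  qed
  then show ?thesis
    using PSL2.normalizer_iff_conj_closed[OF finite_proj_centralizer
        proj_centralizer_subset_carrier pr_in_carrier[OF W(1)]] by blast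
qed

lemma anticommuting_not_in_proj_centralizer:
  fixes W Z :: "'a::field mat22"
  assumes "(2::'a) \<noteq> 0" "mdet Z = 1" "mdet W = 1" "mmul W Z = mneg (mmul Z W)"
  shows "pr W \<notin> proj_centralizer Z"
proof
  assume "pr W \<in> proj_centralizer Z"
  then obtain B where "pr W = pr B" "mmul B Z = mmul Z B"
    unfolding proj_centralizer_def by blast
  then have "mmul W Z = mmul Z W"
    by (auto simp: pr_eq_iff mmul_mneg_left mmul_mneg_right mneg_eq_iff)
  with assms(4) have "mneg (mmul Z W) = mmul Z W"
    by simp
  moreover have "mdet (mmul Z W) \<noteq> 0"
    using assms(2,3) by (simp add: mdet_mmul)
  ultimately show False
    using mneg_neq_self[OF assms(1)] by blast
qed

lemma normalizing_conj_into_proj_centralizer: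
  fixes a b c :: "'a::{field,finite}"
  assumes odd: "odd (card (UNIV :: 'a set))" and nonsquare: "\<forall>x::'a. x\<^sup>2 \<noteq> -1"
    and Z: "a * a + b * c = -1" and B: "mdet B = 1"
    and normalizes: "pr B \<otimes>\<^bsub>PSL2\<^esub> pr (a,b,c,-a) \<otimes>\<^bsub>PSL2\<^esub> inv\<^bsub>PSL2\<^esub> (pr B) = pr (a,b,c,-a)"
  shows "\<exists>x\<in>carrier PSL2. inv\<^bsub>PSL2\<^esub> x \<otimes>\<^bsub>PSL2\<^esub> pr B \<otimes>\<^bsub>PSL2\<^esub> x \<in> proj_centralizer (a,b,c,-a)"
proof -
  interpret PSL2: group "PSL2 :: 'a mat22 set monoid"
    by (rule PSL2_group)
  have Z_det: "mdet (a,b,c,-a) = 1"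
    using Z mdet_traceless_eq_one_iff by blast
  consider "mmul B (a,b,c,-a) = mmul (a,b,c,-a) B"
    | "mmul B (a,b,c,-a) = mneg (mmul (a,b,c,-a) B)"
    using pr_conj_eq_imp_commute_up_to_sign[OF B Z_det normalizes] by blast
  then show ?thesis
  proof cases
    case 1
    then have "pr B \<in> proj_centralizer (a,b,c,-a)"
      using B unfolding proj_centralizer_def by blast
    then show ?thesis
      using pr_in_carrier[OF B] by (intro bexI[of _ "\<one>\<^bsub>PSL2\<^esub>"]) simp_all
  next
    case 2
    then obtain Q where "mdet Q = 1" "mmul Q (a,b,c,-a) = mmul B Q"
      using anticommute_traceless_intertwine[OF odd nonsquare Z B] by blast
    then show ?thesis
      using pr_intertwine_conj[OF _ B] pr_in_proj_centralizer_self[OF Z_det] pr_in_carrier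
      by (metis)
  qed
qed

lemma generate_pr_subset_proj_centralizer:
  fixes A :: "'a::{field,finite} mat22"
  assumes A: "mdet A = 1"
  shows "generate PSL2 {pr A} \<subseteq> proj_centralizer (A [^]\<^bsub>SL2\<^esub> (m::nat))"
proof
  interpret SL2: group "SL2 :: 'a mat22 monoid"
    by (rule SL2_group)
  interpret PSL2: group "PSL2 :: 'a mat22 set monoid"
    by (rule PSL2_group)
  fix u
  assume "u \<in> generate PSL2 {pr A}"
  then obtain k :: nat where "u = pr A [^]\<^bsub>PSL2\<^esub> k"
    using PSL2.generate_pow_on_finite_carrier[OF finite_PSL2_carrier pr_in_carrier[OF A]] by blast
  then have "u = pr (A [^]\<^bsub>SL2\<^esub> k)"
    by (simp add: pr_pow[OF A])
  moreover have "mdet (A [^]\<^bsub>SL2\<^esub> k) = 1"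
    using SL2.nat_pow_closed[of A k] A by simp
  moreover have "mmul (A [^]\<^bsub>SL2\<^esub> k) (A [^]\<^bsub>SL2\<^esub> m) = mmul (A [^]\<^bsub>SL2\<^esub> m) (A [^]\<^bsub>SL2\<^esub> k)"
    using SL2.nat_pow_comm[of A k m] A by simp
  ultimately show "u \<in> proj_centralizer (A [^]\<^bsub>SL2\<^esub> m)"
    unfolding proj_centralizer_def by blast
qed

lemma proj_centralizer_eq_if_card:
  fixes a b c :: "'a::{field,finite}"
  assumes odd: "odd (card (UNIV :: 'a set))" and nonsquare: "\<forall>x::'a. x\<^sup>2 \<noteq> -1"
    and Z: "a * a + b * c = -1"
    and "U \<subseteq> proj_centralizer (a,b,c,-a)" "card (UNIV :: 'a set) + 1 \<le> 2 * card U"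
  shows "U = proj_centralizer (a,b,c,-a)"
proof -
  have "2 * card (proj_centralizer (a,b,c,-a)) \<le> card (UNIV :: 'a set) + 1"
    using card_proj_centralizer_le[OF two_neq_zero_if_odd_card[OF odd] nonsquare Z]
      traceless_offdiag_nonzero(2)[OF nonsquare Z] .
  then show ?thesis
    using assms(4,5) card_mono[OF finite_proj_centralizer assms(4)]
    by (intro card_subset_eq[OF finite_proj_centralizer]) linarith+
qed

lemma cyclic_half_order_eq_proj_centralizer:
  fixes U :: "'a::{field,finite} mat22 set set"
  assumes q: "card (UNIV :: 'a set) mod 4 = 3"
    and g: "g \<in> carrier PSL2" and U: "U = generate PSL2 {g}"
    and card_U: "card U = (card (UNIV :: 'a set) + 1) div 2"
  obtains a b c where "a * a + b * c = -1" "U = proj_centralizer (a,b,c,-a)"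
    "pr (a,b,c,-a) \<in> U" "pr (a,b,c,-a) \<otimes>\<^bsub>PSL2\<^esub> pr (a,b,c,-a) = \<one>\<^bsub>PSL2\<^esub>"
    "\<forall>y\<in>U. y \<otimes>\<^bsub>PSL2\<^esub> y = \<one>\<^bsub>PSL2\<^esub> \<longrightarrow> y = \<one>\<^bsub>PSL2\<^esub> \<or> y = pr (a,b,c,-a)"
proof -
  interpret SL2: group "SL2 :: 'a mat22 monoid"
    by (rule SL2_group)
  interpret PSL2: group "PSL2 :: 'a mat22 set monoid"
    by (rule PSL2_group)
  have odd: "odd (card (UNIV :: 'a set))" and nonsquare: "\<forall>x::'a. x\<^sup>2 \<noteq> -1"
    using q minus_one_not_square by (presburger, blast)
  define m where "m = card U div 2"
  have m: "card U = 2 * m" "0 < m"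
    using q card_U unfolding m_def by presburger+
  have ord: "PSL2.ord g = 2 * m"
    using PSL2.generate_pow_card[OF g] U m(1) by simp
  obtain A where A: "mdet A = 1" "g = pr A"
    using g by (auto simp: PSL2_carrier)
  define Z where "Z = A [^]\<^bsub>SL2\<^esub> m"
  have Z_det: "mdet Z = 1"
    using SL2.nat_pow_closed[of A m] A(1) by (simp add: Z_def)
  have Z_pow: "pr Z = g [^]\<^bsub>PSL2\<^esub> m"
    by (simp add: Z_def A pr_pow)
  have "pr Z \<otimes>\<^bsub>PSL2\<^esub> pr Z = \<one>\<^bsub>PSL2\<^esub>" "pr Z \<noteq> \<one>\<^bsub>PSL2\<^esub>"
    using PSL2.pow_half_ord[OF g ord m(2)] by (simp_all add: Z_pow)
  then obtain a b c where Z: "Z = (a,b,c,-a)" "a * a + b * c = -1"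
    using PSL2_involution_lift_traceless[OF two_neq_zero_if_odd_card[OF odd] nonsquare Z_det] by blast
  have "U \<subseteq> proj_centralizer Z"
    unfolding U A(2) Z_def by (rule generate_pr_subset_proj_centralizer[OF A(1)])
  moreover have "card (UNIV :: 'a set) + 1 \<le> 2 * card U"
    using q card_U by presburger
  ultimately have "U = proj_centralizer Z"
    unfolding Z(1) by (rule proj_centralizer_eq_if_card[OF odd nonsquare Z(2)])
  moreover have "pr Z \<in> U"
    unfolding U Z_pow using PSL2.generate_pow_on_finite_carrier[OF finite_PSL2_carrier g] by blast
  moreover have "\<forall>y\<in>U. y \<otimes>\<^bsub>PSL2\<^esub> y = \<one>\<^bsub>PSL2\<^esub> \<longrightarrow> y = \<one>\<^bsub>PSL2\<^esub> \<or> y = pr Z"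
    using PSL2.cyclic_involution_unique[OF finite_PSL2_carrier g ord] U Z_pow by blast
  ultimately show ?thesis
    using that Z \<open>pr Z \<otimes>\<^bsub>PSL2\<^esub> pr Z = \<one>\<^bsub>PSL2\<^esub>\<close> by blast
qed

lemma normalizer_proj_centralizer_intersecting:
  fixes a b c :: "'a::{field,finite}"
  assumes odd: "odd (card (UNIV :: 'a set))" and nonsquare: "\<forall>x::'a. x\<^sup>2 \<noteq> -1"
    and Z: "a * a + b * c = -1"
    and U: "subgroup U PSL2" "U = proj_centralizer (a,b,c,-a)"
    and z: "pr (a,b,c,-a) \<in> U" "pr (a,b,c,-a) \<otimes>\<^bsub>PSL2\<^esub> pr (a,b,c,-a) = \<one>\<^bsub>PSL2\<^esub>"
      "\<forall>y\<in>U. y \<otimes>\<^bsub>PSL2\<^esub> y = \<one>\<^bsub>PSL2\<^esub> \<longrightarrow> y = \<one>\<^bsub>PSL2\<^esub> \<or> y = pr (a,b,c,-a)"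
  shows "intersecting PSL2 U (normalizer PSL2 U)"
proof (rule intersecting_if_conj_into[OF PSL2_group])
  interpret PSL2: group "PSL2 :: 'a mat22 set monoid"
    by (rule PSL2_group)
  show V: "subgroup (normalizer PSL2 U) PSL2"
    by (rule PSL2.normalizer_imp_subgroup[OF subgroup.subset[OF U(1)]])
  show "\<forall>h\<in>normalizer PSL2 U. \<exists>x\<in>carrier PSL2. inv\<^bsub>PSL2\<^esub> x \<otimes>\<^bsub>PSL2\<^esub> h \<otimes>\<^bsub>PSL2\<^esub> x \<in> U"
  proof
    fix h
    assume h: "h \<in> normalizer PSL2 U"
    then obtain B where B: "mdet B = 1" "h = pr B"
      using subgroup.subset[OF V] by (auto simp: PSL2_carrier)
    have "h \<otimes>\<^bsub>PSL2\<^esub> pr (a,b,c,-a) \<otimes>\<^bsub>PSL2\<^esub> inv\<^bsub>PSL2\<^esub> h = pr (a,b,c,-a)"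
      by (rule PSL2.normalizer_fixes_unique_involution[OF U(1) h z])
    then show "\<exists>x\<in>carrier PSL2. inv\<^bsub>PSL2\<^esub> x \<otimes>\<^bsub>PSL2\<^esub> h \<otimes>\<^bsub>PSL2\<^esub> x \<in> U"
      using normalizing_conj_into_proj_centralizer[OF odd nonsquare Z B(1)] B(2) U(2) by simp
  qed
qed

lemma card_normalizer_proj_centralizer:
  fixes a b c :: "'a::{field,finite}"
  assumes odd: "odd (card (UNIV :: 'a set))" and nonsquare: "\<forall>x::'a. x\<^sup>2 \<noteq> -1"
    and Z: "a * a + b * c = -1"
    and U: "subgroup U PSL2" "U = proj_centralizer (a,b,c,-a)"
  shows "2 * card U \<le> card (normalizer PSL2 U)"
proof -
  interpret PSL2: group "PSL2 :: 'a mat22 set monoid"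
    by (rule PSL2_group)
  obtain W where W: "mdet W = 1" "mmul W (a,b,c,-a) = mneg (mmul (a,b,c,-a) W)"
    using traceless_anticommute_exists[OF odd Z traceless_offdiag_nonzero(2)[OF nonsquare Z]]
    by blast
  have "pr W \<in> normalizer PSL2 U" "pr W \<notin> U"
    using anticommuting_in_normalizer[OF W] anticommuting_not_in_proj_centralizer[OF
        two_neq_zero_if_odd_card[OF odd] _ W] Z U(2) mdet_traceless_eq_one_iff by auto
  moreover have "U \<subseteq> normalizer PSL2 U"
    using subgroup.subset[OF normal_imp_subgroup[OF PSL2.subgroup_in_normalizer[OF U(1)]]]
    by simp
  ultimately show ?thesis
    using PSL2.proper_subgroup_card[OF finite_PSL2_carrier U(1)
        PSL2.normalizer_imp_subgroup[OF subgroup.subset[OF U(1)]]] by blast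
qed

theorem proposition6p2:
  fixes U V :: "('a::{field,finite}) mat22 set set"
  assumes "card (UNIV :: 'a set) mod 4 = 3"
    and "subgroup U (PSL2 :: 'a mat22 set monoid)"
    and "\<exists>g\<in>carrier (PSL2 :: 'a mat22 set monoid). U = generate PSL2 {g}"
    and "card U = (card (UNIV :: 'a set) + 1) div 2"
    and "V = normalizer (PSL2 :: 'a mat22 set monoid) U"
  shows "intersecting (PSL2 :: 'a mat22 set monoid) U V \<and> rho (PSL2 :: 'a mat22 set monoid) U \<ge> 2"
proof -
  have odd: "odd (card (UNIV :: 'a set))" and nonsquare: "\<forall>x::'a. x\<^sup>2 \<noteq> -1"
    using assms(1) minus_one_not_square by (presburger, blast)
  obtain a b c where Z: "a * a + b * c = -1" and U: "U = proj_centralizer (a,b,c,-a)"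
    and z: "pr (a,b,c,-a) \<in> U" "pr (a,b,c,-a) \<otimes>\<^bsub>PSL2\<^esub> pr (a,b,c,-a) = \<one>\<^bsub>PSL2\<^esub>"
    "\<forall>y\<in>U. y \<otimes>\<^bsub>PSL2\<^esub> y = \<one>\<^bsub>PSL2\<^esub> \<longrightarrow> y = \<one>\<^bsub>PSL2\<^esub> \<or> y = pr (a,b,c,-a)"
    using assms(3) cyclic_half_order_eq_proj_centralizer[OF assms(1) _ _ assms(4)] by metis
  have intersecting: "intersecting PSL2 U V"
    unfolding assms(5) by (rule normalizer_proj_centralizer_intersecting[OF odd nonsquare Z assms(2) U z])
  have "2 * card U \<le> card V"
    unfolding assms(5) by (rule card_normalizer_proj_centralizer[OF odd nonsquare Z assms(2) U])
  moreover have "card U > 0"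
    using assms(1,4) by presburger
  ultimately have "2 \<le> real (card V) / real (card U)"
    by (simp add: le_divide_eq)
  then show ?thesis
    using intersecting card_div_le_rho[OF finite_PSL2_carrier intersecting] by linarith
qed

end
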